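(* In the static load balancing game described in the context, fix a player $i$ and the actions $a_{-i}$ of the other players. Suppose the servers are labeled so that $\hat{\mu}_{i1}\ge \hat{\mu}_{i2}\ge\cdots\ge\hat{\mu}_{im}$. Then the optimal solution of the convex program $$\min_{a_i}\ D_i(a)\quad\text{s.t.}\quad \sum_{j=1}^m a_{ij}=1,\ a_{ij}\ge 0\ \ \forall j\in[m]$$ is given by $$a_{ij}=\begin{cases}\dfrac{\mu_j}{\lambda_i}\left(\dfrac{\lambda_i+\sum_{k=1}^{c_i-1}\frac{\mu_k}{\hat{\mu}_{ik}}}{\sum_{k=1}^{c_i-1}\mu_k}-\dfrac{1}{\hat{\mu}_{ij}}\right), & 1\le j<c_i,\\[2mm] 0, & c_i\le j\le m,\end{cases}$$ where $c_i$ is the smallest integer index satisfying $$\hat{\mu}_{ic_i}\left(\lambda_i+\sum_{k=1}^{c_i-1}\frac{\mu_k}{\hat{\mu}_{ik}}\right)\le \sum_{k=1}^{c_i-1}\mu_k,$$ with $c_i=m+1$ if no index in $\{1,\dots,m\}$ satisfies this inequality.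
   Context: Static load balancing game: there are $m$ servers with service rates $\mu_j>0$ and initial loads $s_j^0\ge0$, and $n$ players; player $i$ holds a job of length $\lambda_i>0$. Player $i$'s action is $a_i=(a_{i1},\dots,a_{im})$ in the probability simplex, $a_{ij}$ being the fraction of job $i$ placed on server $j$. The cost of player $i$ under profile $a$ is $$D_i(a)=\sum_{j=1}^m \lambda_i a_{ij}\left(\frac{\lambda_i a_{ij}}{2\mu_j}+\frac{s_j^0+\sum_{k\neq i}\lambda_k a_{kj}}{\mu_j}\right).$$ The relative available processing rate of server $j$ as viewed by player $i$ is $\hat{\mu}_{ij}=\dfrac{\mu_j}{s_j^0+\sum_{k\ne i}\lambda_k a_{kj}}$ (taken to be $+\infty$ when the denominator is $0$, in which case $1/\hat{\mu}_{ij}=0$). *)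

theory Defs
  imports Complex_Main "HOL-Library.Extended_Real"
begin

(* Servers are indexed 1..m, players 1..n.
   lam k   : job length of player k
   mu j    : service rate of server j
   s0 j    : initial load of server j
   a k j   : fraction of job k placed on server j (a profile) *)

definition others_load ::
  "(nat \<Rightarrow> real) \<Rightarrow> (nat \<Rightarrow> real) \<Rightarrow> nat \<Rightarrow> nat \<Rightarrow> (nat \<Rightarrow> nat \<Rightarrow> real) \<Rightarrow> nat \<Rightarrow> real" where
  "others_load lam s0 n i a j = s0 j + (\<Sum>k\<in>{1..n} - {i}. lam k * a k j)"

definition cost ::
  "(nat \<Rightarrow> real) \<Rightarrow> (nat \<Rightarrow> real) \<Rightarrow> (nat \<Rightarrow> real) \<Rightarrow> nat \<Rightarrow> nat \<Rightarrow> nat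
   \<Rightarrow> (nat \<Rightarrow> nat \<Rightarrow> real) \<Rightarrow> real" where
  "cost lam mu s0 n m i a =
     (\<Sum>j=1..m. lam i * a i j * (lam i * a i j / (2 * mu j) + others_load lam s0 n i a j / mu j))"

definition mu_hat ::
  "(nat \<Rightarrow> real) \<Rightarrow> (nat \<Rightarrow> real) \<Rightarrow> (nat \<Rightarrow> real) \<Rightarrow> nat \<Rightarrow> nat
   \<Rightarrow> (nat \<Rightarrow> nat \<Rightarrow> real) \<Rightarrow> nat \<Rightarrow> ereal" where
  "mu_hat lam mu s0 n i a j =
     (if others_load lam s0 n i a j = 0 then \<infinity> else ereal (mu j / others_load lam s0 n i a j))"

definition inv_mu_hat ::
  "(nat \<Rightarrow> real) \<Rightarrow> (nat \<Rightarrow> real) \<Rightarrow> (nat \<Rightarrow> real) \<Rightarrow> nat \<Rightarrow> nat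
   \<Rightarrow> (nat \<Rightarrow> nat \<Rightarrow> real) \<Rightarrow> nat \<Rightarrow> real" where
  "inv_mu_hat lam mu s0 n i a j =
     (if others_load lam s0 n i a j = 0 then 0 else 1 / (mu j / others_load lam s0 n i a j))"

definition c_cond ::
  "(nat \<Rightarrow> real) \<Rightarrow> (nat \<Rightarrow> real) \<Rightarrow> (nat \<Rightarrow> real) \<Rightarrow> nat \<Rightarrow> nat
   \<Rightarrow> (nat \<Rightarrow> nat \<Rightarrow> real) \<Rightarrow> nat \<Rightarrow> bool" where
  "c_cond lam mu s0 n i a c \<longleftrightarrow>
     mu_hat lam mu s0 n i a c *
       ereal (lam i + (\<Sum>k=1..c-1. mu k * inv_mu_hat lam mu s0 n i a k))
     \<le> ereal (\<Sum>k=1..c-1. mu k)"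

definition c_idx ::
  "(nat \<Rightarrow> real) \<Rightarrow> (nat \<Rightarrow> real) \<Rightarrow> (nat \<Rightarrow> real) \<Rightarrow> nat \<Rightarrow> nat \<Rightarrow> nat
   \<Rightarrow> (nat \<Rightarrow> nat \<Rightarrow> real) \<Rightarrow> nat" where
  "c_idx lam mu s0 n m i a =
     (if \<exists>c\<in>{1..m}. c_cond lam mu s0 n i a c
      then (LEAST c. c \<in> {1..m} \<and> c_cond lam mu s0 n i a c)
      else m + 1)"

definition opt_action ::
  "(nat \<Rightarrow> real) \<Rightarrow> (nat \<Rightarrow> real) \<Rightarrow> (nat \<Rightarrow> real) \<Rightarrow> nat \<Rightarrow> nat \<Rightarrow> nat
   \<Rightarrow> (nat \<Rightarrow> nat \<Rightarrow> real) \<Rightarrow> nat \<Rightarrow> real" where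
  "opt_action lam mu s0 n m i a j =
     (let c = c_idx lam mu s0 n m i a in
      if 1 \<le> j \<and> j < c then
        mu j / lam i *
          ((lam i + (\<Sum>k=1..c-1. mu k * inv_mu_hat lam mu s0 n i a k)) / (\<Sum>k=1..c-1. mu k)
           - inv_mu_hat lam mu s0 n i a j)
      else 0)"

definition in_simplex :: "nat \<Rightarrow> (nat \<Rightarrow> real) \<Rightarrow> bool" where
  "in_simplex m x \<longleftrightarrow> (\<forall>j\<in>{1..m}. 0 \<le> x j) \<and> (\<Sum>j=1..m. x j) = 1"

end

theory Submission
  imports Defs
begin

text \<open>
  The other players' loads do not depend on \<open>a\<^sub>i\<close>, so player \<open>i\<close>'s cost is the separable convex
  quadratic \<open>\<Sum>\<^sub>j \<lambda> x\<^sub>j (\<lambda> x\<^sub>j / (2 \<mu>\<^sub>j) + u\<^sub>j)\<close> in \<open>x = a\<^sub>i\<close>, where \<open>u\<^sub>j = 1 / \<mu>-hat\<^sub>i\<^sub>j\<close>.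
  Its partial derivatives are \<open>\<lambda> (\<lambda> x\<^sub>j / \<mu>\<^sub>j + u\<^sub>j)\<close>; if at a point \<open>y\<close> of the simplex they equal a
  common level \<open>\<lambda> t\<close> on the support of \<open>y\<close> and are at least \<open>\<lambda> t\<close> elsewhere, then the cost of any
  other point \<open>x\<close> of the simplex exceeds that of \<open>y\<close> by at least \<open>\<Sum>\<^sub>j \<lambda>\<^sup>2 (x\<^sub>j - y\<^sub>j)\<^sup>2 / (2 \<mu>\<^sub>j)\<close>,
  so \<open>y\<close> is the unique minimiser.
  The claimed action is water filling: servers \<open>1, \<dots>, c - 1\<close> are filled so that
  \<open>\<lambda> y\<^sub>j / \<mu>\<^sub>j + u\<^sub>j = t\<close> with \<open>t = (\<lambda> + \<Sum>\<^sub>k\<^sub><\<^sub>c \<mu>\<^sub>k u\<^sub>k) / \<Sum>\<^sub>k\<^sub><\<^sub>c \<mu>\<^sub>k\<close>. Since \<open>u\<close> is nondecreasing, the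
  inequality defining \<open>c\<close> (which reads \<open>t \<le> u\<^sub>c\<close>) and its failure at \<open>c - 1\<close> give
  \<open>u\<^sub>j \<le> u\<^sub>c\<^sub>-\<^sub>1 \<le> t \<le> u\<^sub>c \<le> u\<^sub>j'\<close> for \<open>j < c \<le> j'\<close>, which is exactly this first-order condition.
\<close>

lemma sum_atLeastAtMost_last:
  fixes f :: "nat \<Rightarrow> 'a::comm_monoid_add"
  shows "1 \<le> d \<Longrightarrow> (\<Sum>k=1..d. f k) = (\<Sum>k=1..d-1. f k) + f d"
  by (cases d) (auto simp: sum.cl_ivl_Suc)

definition quad_cost :: "real \<Rightarrow> (nat \<Rightarrow> real) \<Rightarrow> (nat \<Rightarrow> real) \<Rightarrow> nat \<Rightarrow> (nat \<Rightarrow> real) \<Rightarrow> real" where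
  "quad_cost lam mu u m x = (\<Sum>j=1..m. lam * x j * (lam * x j / (2 * mu j) + u j))"

lemma quad_cost_diff:
  assumes "\<forall>j\<in>{1..m}. mu j \<noteq> 0"
  shows "quad_cost lam mu u m x - quad_cost lam mu u m y =
    (\<Sum>j=1..m. lam\<^sup>2 * (x j - y j)\<^sup>2 / (2 * mu j))
      + lam * (\<Sum>j=1..m. (x j - y j) * (lam * y j / mu j + u j))"
proof -
  have "quad_cost lam mu u m x - quad_cost lam mu u m y =
      (\<Sum>j=1..m. lam\<^sup>2 * (x j - y j)\<^sup>2 / (2 * mu j) + lam * ((x j - y j) * (lam * y j / mu j + u j)))"
    unfolding quad_cost_def sum_subtractf[symmetric]
    using assms by (intro sum.cong refl) (simp add: field_simps power2_eq_square)
  then show ?thesis by (simp add: sum.distrib sum_distrib_left)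
qed

lemma simplex_first_order_nonneg:
  assumes "in_simplex m x" "in_simplex m y"
    and "\<forall>j\<in>{1..m}. t \<le> g j" "\<forall>j\<in>{1..m}. y j \<noteq> 0 \<longrightarrow> g j = t"
  shows "0 \<le> (\<Sum>j=1..m. (x j - y j) * g j)"
proof -
  have "(\<Sum>j=1..m. (x j - y j) * t) = 0"
    using assms(1,2) unfolding in_simplex_def sum_distrib_right[symmetric] sum_subtractf by simp
  moreover have "(\<Sum>j=1..m. (x j - y j) * t) \<le> (\<Sum>j=1..m. (x j - y j) * g j)"
  proof (rule sum_mono)
    fix j assume j: "j \<in> {1..m}"
    show "(x j - y j) * t \<le> (x j - y j) * g j"
    proof (cases "y j = 0")
      case True
      then show ?thesis using assms(1,3) j unfolding in_simplex_def by (simp add: mult_left_mono)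
    qed (use assms(4) j in simp)
  qed
  ultimately show ?thesis by simp
qed

lemma quad_cost_excess:
  assumes "\<forall>j\<in>{1..m}. 0 < mu j" "0 < lam" "in_simplex m x" "in_simplex m y"
    and "\<forall>j\<in>{1..m}. t \<le> lam * y j / mu j + u j"
    and "\<forall>j\<in>{1..m}. y j \<noteq> 0 \<longrightarrow> lam * y j / mu j + u j = t"
  shows "(\<Sum>j=1..m. lam\<^sup>2 * (x j - y j)\<^sup>2 / (2 * mu j))
           \<le> quad_cost lam mu u m x - quad_cost lam mu u m y"
proof -
  have "0 \<le> (\<Sum>j=1..m. (x j - y j) * (lam * y j / mu j + u j))"
    using assms(3-6) by (rule simplex_first_order_nonneg)
  moreover have "\<forall>j\<in>{1..m}. mu j \<noteq> 0" using assms(1) by auto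
  ultimately show ?thesis using assms(2) by (simp add: quad_cost_diff)
qed

lemma quad_cost_unique_min:
  assumes "\<forall>j\<in>{1..m}. 0 < mu j" "0 < lam" "in_simplex m y"
    and "\<forall>j\<in>{1..m}. t \<le> lam * y j / mu j + u j"
    and "\<forall>j\<in>{1..m}. y j \<noteq> 0 \<longrightarrow> lam * y j / mu j + u j = t"
  shows "\<forall>x. in_simplex m x \<longrightarrow> quad_cost lam mu u m y \<le> quad_cost lam mu u m x"
    and "\<forall>x. in_simplex m x \<and> quad_cost lam mu u m x \<le> quad_cost lam mu u m y
           \<longrightarrow> (\<forall>j\<in>{1..m}. x j = y j)"
proof -
  have terms_nonneg: "\<forall>j\<in>{1..m}. 0 \<le> lam\<^sup>2 * (x j - y j)\<^sup>2 / (2 * mu j)" for x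
    using assms(1) by auto
  have sum_terms_nonneg: "0 \<le> (\<Sum>j=1..m. lam\<^sup>2 * (x j - y j)\<^sup>2 / (2 * mu j))" for x
    using terms_nonneg[of x] by (intro sum_nonneg) blast
  note excess = quad_cost_excess[OF assms(1,2) _ assms(3-5)]
  show "\<forall>x. in_simplex m x \<longrightarrow> quad_cost lam mu u m y \<le> quad_cost lam mu u m x"
  proof (intro allI impI)
    fix x assume "in_simplex m x"
    then show "quad_cost lam mu u m y \<le> quad_cost lam mu u m x"
      using excess[of x] sum_terms_nonneg[of x] by simp
  qed
  show "\<forall>x. in_simplex m x \<and> quad_cost lam mu u m x \<le> quad_cost lam mu u m y
           \<longrightarrow> (\<forall>j\<in>{1..m}. x j = y j)"
  proof (intro allI impI)
    fix x assume "in_simplex m x \<and> quad_cost lam mu u m x \<le> quad_cost lam mu u m y"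
    then have "(\<Sum>j=1..m. lam\<^sup>2 * (x j - y j)\<^sup>2 / (2 * mu j)) \<le> 0"
      using excess[of x] by simp
    then have "(\<Sum>j=1..m. lam\<^sup>2 * (x j - y j)\<^sup>2 / (2 * mu j)) = 0"
      using sum_terms_nonneg[of x] by simp
    then have "\<forall>j\<in>{1..m}. lam\<^sup>2 * (x j - y j)\<^sup>2 / (2 * mu j) = 0"
      using terms_nonneg[of x] by (subst (asm) sum_nonneg_eq_0_iff) auto
    then show "\<forall>j\<in>{1..m}. x j = y j" using assms(1,2) by fastforce
  qed
qed

locale water_filling =
  fixes lam :: real and mu u :: "nat \<Rightarrow> real" and m c :: nat
  assumes lam_pos: "0 < lam"
    and mu_pos: "\<And>j. j \<in> {1..m} \<Longrightarrow> 0 < mu j"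
    and u_mono: "\<And>j j'. 1 \<le> j \<Longrightarrow> j \<le> j' \<Longrightarrow> j' \<le> m \<Longrightarrow> u j \<le> u j'"
    and c_ge: "2 \<le> c" and c_le: "c \<le> m + 1"
    and below_level: "(\<Sum>k=1..c-2. mu k) * u (c-1) < lam + (\<Sum>k=1..c-2. mu k * u k)"
    and at_level: "c \<le> m \<Longrightarrow> lam + (\<Sum>k=1..c-1. mu k * u k) \<le> (\<Sum>k=1..c-1. mu k) * u c"
begin

definition level :: real where
  "level = (lam + (\<Sum>k=1..c-1. mu k * u k)) / (\<Sum>k=1..c-1. mu k)"

definition fill :: "nat \<Rightarrow> real" where
  "fill j = (if 1 \<le> j \<and> j < c then mu j / lam * (level - u j) else 0)"

lemma filled_capacity_pos: "0 < (\<Sum>k=1..c-1. mu k)"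
  using c_ge c_le mu_pos by (intro sum_pos) auto

lemma level_ge_last_filled: "u (c-1) \<le> level"
proof -
  have "1 \<le> c - 1" "c - 1 - 1 = c - 2" using c_ge by auto
  then have "(\<Sum>k=1..c-1. mu k) = (\<Sum>k=1..c-2. mu k) + mu (c-1)"
    and "(\<Sum>k=1..c-1. mu k * u k) = (\<Sum>k=1..c-2. mu k * u k) + mu (c-1) * u (c-1)"
    by (metis sum_atLeastAtMost_last)+
  then have "(\<Sum>k=1..c-1. mu k) * u (c-1) \<le> lam + (\<Sum>k=1..c-1. mu k * u k)"
    using below_level by (simp add: algebra_simps)
  then show ?thesis
    using filled_capacity_pos unfolding level_def by (simp add: le_divide_eq mult.commute)
qed

lemma level_ge: "1 \<le> j \<Longrightarrow> j < c \<Longrightarrow> u j \<le> level"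
  using u_mono[of j "c-1"] c_le level_ge_last_filled by fastforce

lemma level_le: "c \<le> j \<Longrightarrow> j \<le> m \<Longrightarrow> level \<le> u j"
proof -
  assume j: "c \<le> j" "j \<le> m"
  have "level \<le> u c"
    using at_level j filled_capacity_pos unfolding level_def by (simp add: divide_le_eq mult.commute)
  then show "level \<le> u j" using u_mono[of c j] c_ge j by auto
qed

lemma fill_in_simplex: "in_simplex m fill"
proof -
  have "(\<Sum>j=1..m. fill j) = (\<Sum>j=1..c-1. fill j)"
    using c_le by (intro sum.mono_neutral_right) (auto simp: fill_def)
  also have "\<dots> = (\<Sum>j=1..c-1. (level * mu j - mu j * u j) / lam)"
    using c_ge by (intro sum.cong) (auto simp: fill_def field_simps)
  also have "\<dots> = (level * (\<Sum>k=1..c-1. mu k) - (\<Sum>k=1..c-1. mu k * u k)) / lam"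
    by (simp add: sum_divide_distrib[symmetric] sum_subtractf sum_distrib_left)
  also have "\<dots> = 1"
    using filled_capacity_pos lam_pos unfolding level_def by (simp add: field_simps)
  finally have "(\<Sum>j=1..m. fill j) = 1" .
  moreover have "0 \<le> fill j" if "j \<in> {1..m}" for j
    using level_ge[of j] mu_pos[OF that] lam_pos by (simp add: fill_def)
  ultimately show ?thesis unfolding in_simplex_def by blast
qed

lemma fill_marginal_cost:
  assumes "j \<in> {1..m}"
  shows "level \<le> lam * fill j / mu j + u j"
    and "fill j \<noteq> 0 \<Longrightarrow> lam * fill j / mu j + u j = level"
proof -
  have "lam * fill j / mu j + u j = (if j < c then level else u j)"
    using assms mu_pos[OF assms] lam_pos by (auto simp: fill_def field_simps)
  then show "level \<le> lam * fill j / mu j + u j"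
    and "fill j \<noteq> 0 \<Longrightarrow> lam * fill j / mu j + u j = level"
    using assms level_le[of j] by (auto simp: fill_def)
qed

end

lemma least_satisfying_index:
  fixes Q :: "nat \<Rightarrow> bool"
  assumes "1 \<le> m" "\<not> Q 1"
    and c_def: "c = (if \<exists>c\<in>{1..m}. Q c then LEAST c. c \<in> {1..m} \<and> Q c else m + 1)"
  shows "2 \<le> c" "c \<le> m + 1" "c \<le> m \<Longrightarrow> Q c" "1 \<le> d \<Longrightarrow> d < c \<Longrightarrow> \<not> Q d"
proof -
  have "2 \<le> c \<and> c \<le> m + 1 \<and> (c \<le> m \<longrightarrow> Q c) \<and> (\<forall>d. 1 \<le> d \<and> d < c \<longrightarrow> \<not> Q d)"
  proof (cases "\<exists>c\<in>{1..m}. Q c")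
    case True
    then have c_eq: "c = (LEAST c. c \<in> {1..m} \<and> Q c)" using c_def by simp
    obtain c0 where "c0 \<in> {1..m} \<and> Q c0" using True by blast
    then have least: "c \<in> {1..m} \<and> Q c" unfolding c_eq by (rule LeastI)
    have minimal: "c \<le> d" if "d \<in> {1..m} \<and> Q d" for d unfolding c_eq using that by (rule Least_le)
    have "c \<noteq> 1" using least assms(2) by auto
    then show ?thesis using least minimal by fastforce
  qed (use assms c_def in auto)
  then show "2 \<le> c" "c \<le> m + 1" "c \<le> m \<Longrightarrow> Q c" "1 \<le> d \<Longrightarrow> d < c \<Longrightarrow> \<not> Q d" by auto
qed

lemma others_load_nonneg:
  assumes "0 \<le> s0 j" "\<forall>k\<in>{1..n}. 0 < lam k" "\<forall>k\<in>{1..n} - {i}. in_simplex m (a k)" "j \<in> {1..m}"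
  shows "0 \<le> others_load lam s0 n i a j"
proof -
  have "0 \<le> lam k * a k j" if "k \<in> {1..n} - {i}" for k
    using assms(2-4) that unfolding in_simplex_def by (simp add: less_imp_le)
  then have "0 \<le> (\<Sum>k\<in>{1..n} - {i}. lam k * a k j)" by (rule sum_nonneg)
  then show ?thesis unfolding others_load_def using assms(1) by simp
qed

lemma inv_mu_hat_eq: "inv_mu_hat lam mu s0 n i a j = others_load lam s0 n i a j / mu j"
  by (simp add: inv_mu_hat_def)

lemma cost_eq_quad_cost:
  "cost lam mu s0 n m i (a(i := x)) = quad_cost (lam i) mu (inv_mu_hat lam mu s0 n i a) m x"
proof -
  have "others_load lam s0 n i (a(i := x)) j = others_load lam s0 n i a j" for j
    unfolding others_load_def by (auto intro: sum.cong)
  then show ?thesis by (simp add: cost_def quad_cost_def inv_mu_hat_eq)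
qed

lemma inv_mu_hat_antimono:
  assumes "0 < mu j" "0 < mu j'"
    and "0 \<le> others_load lam s0 n i a j" "0 \<le> others_load lam s0 n i a j'"
    and "mu_hat lam mu s0 n i a j' \<le> mu_hat lam mu s0 n i a j"
  shows "inv_mu_hat lam mu s0 n i a j \<le> inv_mu_hat lam mu s0 n i a j'"
proof (cases "others_load lam s0 n i a j = 0")
  case False
  then have "others_load lam s0 n i a j' \<noteq> 0"
    using assms(5) by (auto simp: mu_hat_def)
  then show ?thesis using False assms by (auto simp: mu_hat_def inv_mu_hat_def field_simps)
qed (use assms in \<open>simp add: inv_mu_hat_eq\<close>)

lemma c_cond_iff:
  assumes "0 < mu c" "0 \<le> others_load lam s0 n i a c"
    and "0 < lam i + (\<Sum>k=1..c-1. mu k * inv_mu_hat lam mu s0 n i a k)"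
  shows "c_cond lam mu s0 n i a c \<longleftrightarrow>
    lam i + (\<Sum>k=1..c-1. mu k * inv_mu_hat lam mu s0 n i a k)
      \<le> (\<Sum>k=1..c-1. mu k) * inv_mu_hat lam mu s0 n i a c"
  using assms
  by (cases "others_load lam s0 n i a c = 0")
     (auto simp: c_cond_def mu_hat_def inv_mu_hat_def field_simps)

lemma game_water_filling:
  fixes lam mu s0 :: "nat \<Rightarrow> real" and a :: "nat \<Rightarrow> nat \<Rightarrow> real" and n m i :: nat
  assumes "1 \<le> m"
    and mu_pos: "\<forall>j\<in>{1..m}. 0 < mu j"
    and "\<forall>j\<in>{1..m}. 0 \<le> s0 j"
    and "\<forall>k\<in>{1..n}. 0 < lam k"
    and "i \<in> {1..n}"
    and "\<forall>k\<in>{1..n} - {i}. in_simplex m (a k)"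
    and "\<forall>j j'. 1 \<le> j \<and> j \<le> j' \<and> j' \<le> m \<longrightarrow>
           mu_hat lam mu s0 n i a j' \<le> mu_hat lam mu s0 n i a j"
  shows "water_filling (lam i) mu (inv_mu_hat lam mu s0 n i a) m (c_idx lam mu s0 n m i a)"
proof -
  define u where "u = inv_mu_hat lam mu s0 n i a"
  define c where "c = c_idx lam mu s0 n m i a"
  have lam_pos: "0 < lam i" using assms(4,5) by blast
  have load_nonneg: "0 \<le> others_load lam s0 n i a j" if "j \<in> {1..m}" for j
    using assms(3,4,6) that by (intro others_load_nonneg) auto
  have u_nonneg: "0 \<le> u j" if "j \<in> {1..m}" for j
    using load_nonneg[OF that] mu_pos that by (auto simp: u_def inv_mu_hat_eq intro!: divide_nonneg_pos)
  have u_mono: "u j \<le> u j'" if "1 \<le> j" "j \<le> j'" "j' \<le> m" for j j'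
    unfolding u_def using that assms(7) mu_pos load_nonneg
    by (intro inv_mu_hat_antimono) auto
  have cond_iff: "c_cond lam mu s0 n i a d \<longleftrightarrow>
      lam i + (\<Sum>k=1..d-1. mu k * u k) \<le> (\<Sum>k=1..d-1. mu k) * u d" if "d \<in> {1..m}" for d
  proof -
    have "0 \<le> (\<Sum>k=1..d-1. mu k * u k)"
      using that mu_pos u_nonneg by (intro sum_nonneg mult_nonneg_nonneg) (auto simp: less_imp_le)
    then show ?thesis
      unfolding u_def using that mu_pos load_nonneg lam_pos by (intro c_cond_iff) auto
  qed
  have "\<not> c_cond lam mu s0 n i a 1" using cond_iff[of 1] assms(1) lam_pos by simp
  note c_range = least_satisfying_index[OF assms(1) this c_def[unfolded c_idx_def]]
  have "c - 1 \<in> {1..m}" "c - 1 - 1 = c - 2" using c_range(1,2) by auto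
  moreover have "\<not> c_cond lam mu s0 n i a (c - 1)" using c_range(1) by (intro c_range(4)) auto
  ultimately have below_level: "(\<Sum>k=1..c-2. mu k) * u (c-1) < lam i + (\<Sum>k=1..c-2. mu k * u k)"
    using cond_iff[of "c - 1"] by (simp only: not_le)
  have at_level: "lam i + (\<Sum>k=1..c-1. mu k * u k) \<le> (\<Sum>k=1..c-1. mu k) * u c" if "c \<le> m"
    using cond_iff[of c] c_range(1,3) that by simp
  show ?thesis
    unfolding u_def[symmetric] c_def[symmetric]
    using lam_pos mu_pos u_mono c_range(1,2) below_level at_level by unfold_locales auto
qed

theorem lemma1:
  fixes lam mu s0 :: "nat \<Rightarrow> real" and a :: "nat \<Rightarrow> nat \<Rightarrow> real" and n m i :: nat
  assumes "1 \<le> m"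
    and "\<forall>j\<in>{1..m}. 0 < mu j"
    and "\<forall>j\<in>{1..m}. 0 \<le> s0 j"
    and "\<forall>k\<in>{1..n}. 0 < lam k"
    and "i \<in> {1..n}"
    and "\<forall>k\<in>{1..n} - {i}. in_simplex m (a k)"
    and "\<forall>j j'. 1 \<le> j \<and> j \<le> j' \<and> j' \<le> m \<longrightarrow>
           mu_hat lam mu s0 n i a j' \<le> mu_hat lam mu s0 n i a j"
  shows "in_simplex m (opt_action lam mu s0 n m i a)
    \<and> (\<forall>x. in_simplex m x \<longrightarrow>
           cost lam mu s0 n m i (a(i := opt_action lam mu s0 n m i a)) \<le> cost lam mu s0 n m i (a(i := x)))
    \<and> (\<forall>x. in_simplex m x \<and>
           cost lam mu s0 n m i (a(i := x)) \<le> cost lam mu s0 n m i (a(i := opt_action lam mu s0 n m i a))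
           \<longrightarrow> (\<forall>j\<in>{1..m}. x j = opt_action lam mu s0 n m i a j))"
proof -
  interpret water_filling "lam i" mu "inv_mu_hat lam mu s0 n i a" m "c_idx lam mu s0 n m i a"
    using assms by (rule game_water_filling)
  have "opt_action lam mu s0 n m i a = fill"
    by (simp add: fun_eq_iff opt_action_def fill_def level_def Let_def)
  moreover have "\<forall>j\<in>{1..m}. level \<le> lam i * fill j / mu j + inv_mu_hat lam mu s0 n i a j"
    and "\<forall>j\<in>{1..m}. fill j \<noteq> 0 \<longrightarrow> lam i * fill j / mu j + inv_mu_hat lam mu s0 n i a j = level"
    by (simp_all add: fill_marginal_cost)
  note fill_optimal = quad_cost_unique_min[OF assms(2) lam_pos fill_in_simplex this]
  ultimately show ?thesis
    using fill_in_simplex fill_optimal by (simp add: cost_eq_quad_cost)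
qed

end
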